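(* Let $m=2k+1$ with $k$ a positive integer, let $n$ be a positive integer, and let $\{B_1,\dots,B_{k(n-1)+1}\}$ be a basis for $\Gamma_{k,n}$. For $i\in[n]$ let $\vec d_i$ be the $n$-dimensional row vector with $\frac12$ in the $i$-th and $(n-i+1)$-th entries and $0$ elsewhere, and let $C_i$ be the $k\times n$ $(0,1)$-matrix whose $i$-th column is all $1$'s and other entries $0$. For $1\le i\le \lceil n/2\rceil-1$ define the $m\times n$ matrix $\tilde C_i=\begin{pmatrix} C_i\\ \vec d_i\\ C_i^\pi\end{pmatrix}$. If $n$ is even, define $\tilde B_i=\begin{pmatrix} B_i\\ \vec d_{n/2}\\ B_i^\pi\end{pmatrix}$; if $n$ is odd, define $\tilde B_i=\begin{pmatrix} B_i\\ \vec e_{\lceil n/2\rceil}\\ B_i^\pi\end{pmatrix}$, where $\vec e_{\lceil n/2\rceil}$ is the $n$-dimensional unit row vector with $1$ in entry $\lceil n/2\rceil$. Then $\{\tilde B_1,\dots,\tilde B_{k(n-1)+1},\tilde C_1,\dots,\tilde C_{\lceil n/2\rceil-1}\}$ is a basis for $\Gamma^\pi_{m,n}$.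
   Context: A real matrix is stochastic if its entries are nonnegative and each row sums to $1$. $\Gamma_{k,n}$ is the set of $k\times n$ stochastic matrices. For $A=(a_{i,j})\in M_{p,n}$, $A^\pi$ is the $p\times n$ matrix with $(A^\pi)_{i,j}=a_{p+1-i,n+1-j}$; $A$ is centrosymmetric if $A=A^\pi$. $\Gamma^\pi_{m,n}$ is the set of $m\times n$ centrosymmetric stochastic matrices; for $m=2k+1$ it is an affine set of dimension $k(n-1)+\lceil n/2\rceil-1$. A basis for such a set $\Gamma$ of affine dimension $d$ means a set of $d+1$ linearly independent elements of $\Gamma$ whose linear span contains $\Gamma$. Block notation $\begin{pmatrix}X\\ \vec v\\ Y\end{pmatrix}$ means the $k\times n$ matrix $X$, then the row $\vec v$, then the $k\times n$ matrix $Y$, stacked vertically. *)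

theory Defs
  imports Complex_Main
begin

text \<open>A real p x n matrix is modelled as a function nat => nat => real with 0-based
indices (row i < p, column j < n) that vanishes outside the box.\<close>

type_synonym rmat = "nat \<Rightarrow> nat \<Rightarrow> real"

definition is_mat :: "nat \<Rightarrow> nat \<Rightarrow> rmat \<Rightarrow> bool" where
  "is_mat p n A \<longleftrightarrow> (\<forall>i j. (p \<le> i \<or> n \<le> j) \<longrightarrow> A i j = 0)"

definition stochastic :: "nat \<Rightarrow> nat \<Rightarrow> rmat \<Rightarrow> bool" where
  "stochastic p n A \<longleftrightarrow> is_mat p n A \<and> (\<forall>i<p. \<forall>j<n. 0 \<le> A i j)
      \<and> (\<forall>i<p. (\<Sum>j<n. A i j) = 1)"

definition Gamma :: "nat \<Rightarrow> nat \<Rightarrow> rmat set" where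
  "Gamma p n = {A. stochastic p n A}"

text \<open>A^pi (entry (i,j) is a_{p+1-i,n+1-j} in 1-based indexing).\<close>
definition flip :: "nat \<Rightarrow> nat \<Rightarrow> rmat \<Rightarrow> rmat" where
  "flip p n A = (\<lambda>i j. if i < p \<and> j < n then A (p - 1 - i) (n - 1 - j) else 0)"

definition Gamma_pi :: "nat \<Rightarrow> nat \<Rightarrow> rmat set" where
  "Gamma_pi p n = {A. stochastic p n A \<and> flip p n A = A}"

definition lincomb :: "nat \<Rightarrow> (nat \<Rightarrow> real) \<Rightarrow> (nat \<Rightarrow> rmat) \<Rightarrow> rmat" where
  "lincomb N c F = (\<lambda>i j. \<Sum>l<N. c l * F l i j)"

definition lin_indep :: "nat \<Rightarrow> (nat \<Rightarrow> rmat) \<Rightarrow> bool" where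
  "lin_indep N F \<longleftrightarrow> (\<forall>c. lincomb N c F = (\<lambda>i j. 0) \<longrightarrow> (\<forall>l<N. c l = 0))"

text \<open>For S an affine
  set of affine dimension d this is used with N = d + 1.\<close>
definition is_basis :: "rmat set \<Rightarrow> nat \<Rightarrow> (nat \<Rightarrow> rmat) \<Rightarrow> bool" where
  "is_basis S N F \<longleftrightarrow> (\<forall>l<N. F l \<in> S) \<and> lin_indep N F
      \<and> (\<forall>A\<in>S. \<exists>c. A = lincomb N c F)"

text \<open>Row vector d_i (1-based i): 1/2 in entries i and n-i+1, 0 elsewhere (0-based columns).\<close>
definition dvec :: "nat \<Rightarrow> nat \<Rightarrow> nat \<Rightarrow> real" where
  "dvec n i = (\<lambda>j. if j < n \<and> (j = i - 1 \<or> j = n - i) then 1/2 else 0)"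

definition evec :: "nat \<Rightarrow> nat \<Rightarrow> nat \<Rightarrow> real" where
  "evec n i = (\<lambda>j. if j < n \<and> j = i - 1 then 1 else 0)"

definition Cmat :: "nat \<Rightarrow> nat \<Rightarrow> nat \<Rightarrow> rmat" where
  "Cmat k n i = (\<lambda>r j. if r < k \<and> j < n \<and> j = i - 1 then 1 else 0)"

definition stack :: "nat \<Rightarrow> nat \<Rightarrow> rmat \<Rightarrow> (nat \<Rightarrow> real) \<Rightarrow> rmat \<Rightarrow> rmat" where
  "stack k n X v Y = (\<lambda>r j. if j < n then
      (if r < k then X r j else if r = k then v j else if r < 2*k+1 then Y (r - k - 1) j else 0)
     else 0)"

definition half_up :: "nat \<Rightarrow> nat" where
  "half_up n = (n + 1) div 2"

definition Ctilde :: "nat \<Rightarrow> nat \<Rightarrow> nat \<Rightarrow> rmat" where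
  "Ctilde k n i = stack k n (Cmat k n i) (dvec n i) (flip k n (Cmat k n i))"

definition Btilde :: "nat \<Rightarrow> nat \<Rightarrow> rmat \<Rightarrow> rmat" where
  "Btilde k n B = stack k n B (if even n then dvec n (n div 2) else evec n (half_up n))
                     (flip k n B)"

definition new_family :: "nat \<Rightarrow> nat \<Rightarrow> (nat \<Rightarrow> rmat) \<Rightarrow> nat \<Rightarrow> rmat" where
  "new_family k n B l = (if l < k * (n - 1) + 1 then Btilde k n (B l)
                         else Ctilde k n (l - (k * (n - 1) + 1) + 1))"

end

theory Submission
  imports Defs
begin

text \<open>A centrosymmetric stochastic matrix of odd height 2k+1 is the stack of an arbitrary
  stochastic top block X, a symmetric probability vector v as middle row, and X^pi, and the new
  family acts blockwise on such stacks.  On the first ceil(n/2)-1 columns the middle row of every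
  B~_i vanishes while the d_i form a coordinate basis there, which gives linear independence.
  For spanning, v = s * (middle row of B~) + \<Sum> 2 v_i d_i with s = 1 - \<Sum> 2 v_i; subtracting
  \<Sum> 2 v_i C_i from X leaves a top block all of whose row sums equal s, and such a matrix is a
  combination of the B_i whose coefficients sum to s.\<close>

lemma flip_row_sum:
  assumes "r < k"
  shows "(\<Sum>j<n. flip k n X r j) = (\<Sum>j<n. X (k - 1 - r) j)"
proof -
  have "(\<Sum>j<n. flip k n X r j) = (\<Sum>j<n. X (k - 1 - r) (n - Suc j))"
    using assms by (intro sum.cong) (auto simp: flip_def)
  also have "\<dots> = (\<Sum>j<n. X (k - 1 - r) j)"
    by (rule sum.nat_diff_reindex)
  finally show ?thesis .
qed

lemma stack_in_Gamma_pi: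
  assumes X: "stochastic k n X" and sym: "\<forall>j<n. v (n - 1 - j) = v j"
    and nonneg: "\<forall>j<n. 0 \<le> v j" and sum1: "(\<Sum>j<n. v j) = 1"
  shows "stack k n X v (flip k n X) \<in> Gamma_pi (2 * k + 1) n"
proof -
  let ?S = "stack k n X v (flip k n X)"
  have row_sum: "(\<Sum>j<n. ?S i j) = 1" if "i < 2 * k + 1" for i
  proof -
    consider "i < k" | "i = k" | "k < i" by linarith
    then show ?thesis
    proof cases
      case 1
      then show ?thesis using X by (simp add: stack_def stochastic_def)
    next
      case 2
      then show ?thesis using sum1 by (simp add: stack_def)
    next
      case 3
      have "(\<Sum>j<n. ?S i j) = (\<Sum>j<n. flip k n X (i - k - 1) j)"
        using 3 that by (intro sum.cong) (auto simp: stack_def)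
      also have "\<dots> = (\<Sum>j<n. X (k - 1 - (i - k - 1)) j)"
        using 3 that by (intro flip_row_sum) auto
      also have "\<dots> = 1"
        using X 3 that by (auto simp: stochastic_def)
      finally show ?thesis .
    qed
  qed
  have "flip (2 * k + 1) n ?S i j = ?S i j" for i j
  proof (cases "i < 2 * k + 1 \<and> j < n")
    case True
    consider "i < k" | "i = k" | "k < i" by linarith
    then show ?thesis
      using True X sym by cases (auto simp: flip_def stack_def stochastic_def is_mat_def mult_2)
  qed (auto simp: flip_def stack_def)
  then show ?thesis
    using X nonneg row_sum
    by (auto simp: Gamma_pi_def stochastic_def is_mat_def stack_def flip_def)
qed

lemma Gamma_pi_stackE:
  assumes "A \<in> Gamma_pi (2 * k + 1) n"
  obtains X v where "stochastic k n X" and "\<forall>j<n. v (n - 1 - j) = v j"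
    and "(\<Sum>j<n. v j) = 1" and "A = stack k n X v (flip k n X)"
proof
  have A: "stochastic (2 * k + 1) n A" and A_sym: "flip (2 * k + 1) n A = A"
    using assms by (auto simp: Gamma_pi_def)
  define X where "X = (\<lambda>r j. if r < k \<and> j < n then A r j else 0)"
  show "stochastic k n X"
    using A by (simp add: X_def stochastic_def is_mat_def)
  show "\<forall>j<n. A k (n - 1 - j) = A k j"
  proof (intro allI impI)
    fix j assume "j < n"
    then have "flip (2 * k + 1) n A k j = A k (n - 1 - j)" by (simp add: flip_def)
    then show "A k (n - 1 - j) = A k j" using A_sym by simp
  qed
  show "(\<Sum>j<n. A k j) = 1"
    using A by (simp add: stochastic_def)
  show "A = stack k n X (A k) (flip k n X)"
  proof (intro ext)
    fix r j
    show "A r j = stack k n X (A k) (flip k n X) r j"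
    proof (cases "r < 2 * k + 1 \<and> j < n")
      case True
      have "A r j = flip (2 * k + 1) n A r j" using A_sym by simp
      then show ?thesis using True by (auto simp: stack_def flip_def X_def mult_2)
    qed (use A in \<open>auto simp: stochastic_def is_mat_def stack_def\<close>)
  qed
qed

lemma lincomb_stack:
  "lincomb M c (\<lambda>l. stack k n (X l) (v l) (flip k n (X l)))
   = stack k n (lincomb M c X) (\<lambda>j. \<Sum>l<M. c l * v l j) (flip k n (lincomb M c X))"
proof (intro ext)
  fix r j
  consider "\<not> j < n" | "j < n" "r < k" | "j < n" "r = k" | "j < n" "k < r" "r < 2 * k + 1"
    | "j < n" "2 * k + 1 \<le> r" by linarith
  then show "lincomb M c (\<lambda>l. stack k n (X l) (v l) (flip k n (X l))) r j
      = stack k n (lincomb M c X) (\<lambda>j. \<Sum>l<M. c l * v l j) (flip k n (lincomb M c X)) r j"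
    by cases (auto simp: lincomb_def stack_def flip_def)
qed

lemma stack_cong: "(\<And>j. j < n \<Longrightarrow> v j = w j) \<Longrightarrow> stack k n X v Y = stack k n X w Y"
  by (simp add: fun_eq_iff stack_def)

lemma stack_eq_0D:
  assumes "stack k n X v Y = (\<lambda>i j. 0)"
  shows "r < k \<Longrightarrow> j < n \<Longrightarrow> X r j = 0" and "j < n \<Longrightarrow> v j = 0"
  using fun_cong[OF fun_cong[OF assms, of r], of j] fun_cong[OF fun_cong[OF assms, of k], of j]
  by (simp_all add: stack_def)

lemma sum_lessThan_add: "(\<Sum>l<N + m. f l) = (\<Sum>l<N. f l) + (\<Sum>i<m. f (N + i :: nat))"
  by (induction m) (simp_all add: add.assoc)

lemma dvec_sum:
  assumes "1 \<le> i" and "2 * i \<le> n"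
  shows "(\<Sum>j<n. dvec n i j) = 1"
proof -
  have "(\<Sum>j<n. dvec n i j) = (\<Sum>j\<in>{i - 1, n - i}. dvec n i j)"
    using assms by (intro sum.mono_neutral_right) (auto simp: dvec_def)
  also have "\<dots> = 1"
    using assms by (simp add: dvec_def)
  finally show ?thesis .
qed

lemma dvec_symmetric: "1 \<le> i \<Longrightarrow> i \<le> n \<Longrightarrow> j < n \<Longrightarrow> dvec n i (n - 1 - j) = dvec n i j"
  by (auto simp: dvec_def)

lemma dvec_nonneg: "0 \<le> dvec n i j"
  by (simp add: dvec_def)

lemma double_half_up_minus_1: "0 < n \<Longrightarrow> 2 * (half_up n - 1) < n"
  by (simp add: half_up_def)

lemma sum_scaled_dvec:
  assumes "j < n"
  shows "(\<Sum>i<half_up n - 1. a i * dvec n (i + 1) j)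
    = (if j < half_up n - 1 then a j / 2 else 0)
      + (if n - 1 - j < half_up n - 1 then a (n - 1 - j) / 2 else 0)"
proof -
  have "a i * dvec n (i + 1) j
      = (if i = j then a i / 2 else 0) + (if i = n - 1 - j then a i / 2 else 0)"
    if "i < half_up n - 1" for i
    using that assms double_half_up_minus_1[of n] by (auto simp: dvec_def)
  then show ?thesis
    by (simp add: sum.distrib)
qed

definition mid_row :: "nat \<Rightarrow> nat \<Rightarrow> real" where
  "mid_row n = (if even n then dvec n (n div 2) else evec n (half_up n))"

lemma Btilde_eq_stack: "Btilde k n X = stack k n X (mid_row n) (flip k n X)"
  by (simp add: Btilde_def mid_row_def)

lemma mid_row_nonneg: "0 \<le> mid_row n j"
  by (simp add: mid_row_def dvec_def evec_def)

lemma mid_row_symmetric: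
  assumes "j < n"
  shows "mid_row n (n - 1 - j) = mid_row n j"
proof (cases "even n")
  case True
  then show ?thesis
    using assms dvec_symmetric[of "n div 2" n j] by (auto simp: mid_row_def elim: evenE)
next
  case False
  then show ?thesis
    using assms by (auto simp: mid_row_def evec_def half_up_def elim!: oddE)
qed

lemma mid_row_sum:
  assumes "0 < n"
  shows "(\<Sum>j<n. mid_row n j) = 1"
proof (cases "even n")
  case True
  then show ?thesis
    using assms by (auto simp: mid_row_def intro!: dvec_sum elim: evenE)
next
  case False
  then obtain q where q: "n = 2 * q + 1" by (auto elim: oddE)
  have "(\<Sum>j<n. mid_row n j) = (\<Sum>j\<in>{q}. mid_row n j)"
    using False by (intro sum.mono_neutral_right) (auto simp: mid_row_def evec_def half_up_def q)
  also have "\<dots> = 1"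
    using False by (simp add: mid_row_def evec_def half_up_def q)
  finally show ?thesis .
qed

lemma mid_row_eq_0: "j < half_up n - 1 \<Longrightarrow> mid_row n j = 0"
  by (auto simp: mid_row_def dvec_def evec_def half_up_def elim!: evenE oddE)

lemma symmetric_row_decomp:
  assumes sym: "\<forall>j<n. v (n - 1 - j) = v j" and sum1: "(\<Sum>j<n. v j) = 1" and "j < n"
  shows "v j = (1 - (\<Sum>i<half_up n - 1. 2 * v i)) * mid_row n j
    + (\<Sum>i<half_up n - 1. 2 * v i * dvec n (i + 1) j)"
proof -
  define m where "m = half_up n - 1"
  define s where "s = 1 - (\<Sum>i<m. 2 * v i)"
  define D where "D j = (\<Sum>i<m. 2 * v i * dvec n (i + 1) j)" for j
  define middle where "middle j \<longleftrightarrow> m \<le> j \<and> m \<le> n - 1 - j" for j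
  have m: "2 * m < n" using \<open>j < n\<close> by (simp add: m_def half_up_def)
  \<comment> \<open>By symmetry of v, D agrees with v off the middle columns m, ..., n-1-m, so the
    middle entries of v sum to s.\<close>
  have D_eq: "D j' = (if middle j' then 0 else v j')" if "j' < n" for j'
    using sum_scaled_dvec[OF that, of "\<lambda>i. 2 * v i"] sym that m
    by (auto simp: D_def middle_def m_def)
  have "(\<Sum>j<n. D j) = (\<Sum>i<m. 2 * v i * (\<Sum>j<n. dvec n (i + 1) j))"
    by (simp add: D_def sum_distrib_left sum.swap[of _ "{..<n}"])
  also have "\<dots> = (\<Sum>i<m. 2 * v i)"
    using m by (intro sum.cong refl) (simp add: dvec_sum)
  finally have "(\<Sum>j<n. v j - D j) = s"
    by (simp add: sum_subtractf sum1 s_def)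
  moreover have "(\<Sum>j<n. v j - D j) = (\<Sum>j\<in>{j\<in>{..<n}. middle j}. v j)"
    unfolding sum.inter_filter[OF finite_lessThan] by (intro sum.cong refl) (simp add: D_eq)
  ultimately have middle_sum: "(\<Sum>j\<in>{j\<in>{..<n}. middle j}. v j) = s" by simp
  have "v j = s * mid_row n j" if "middle j"
  proof (cases "even n")
    case True
    then obtain q where q: "n = 2 * q" by (auto elim: evenE)
    have mq: "m = q - 1" and "1 \<le> q" using q \<open>j < n\<close> by (auto simp: m_def half_up_def)
    have "{j\<in>{..<n}. middle j} = {q - 1, q}" and "v q = v (q - 1)"
      using sym[rule_format, of "q - 1"] mq q \<open>1 \<le> q\<close> by (auto simp: middle_def)
    then have "s = 2 * v (q - 1)" and "j = q - 1 \<or> j = q"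
      using middle_sum \<open>1 \<le> q\<close> \<open>middle j\<close> \<open>j < n\<close> by auto
    moreover have "mid_row n j = 1 / 2"
      using calculation(2) True q \<open>1 \<le> q\<close> by (auto simp: mid_row_def dvec_def)
    ultimately show ?thesis using \<open>v q = v (q - 1)\<close> by auto
  next
    case False
    then obtain q where q: "n = 2 * q + 1" by (auto elim: oddE)
    have "m = q" using q by (simp add: m_def half_up_def)
    then have "{j\<in>{..<n}. middle j} = {q}" and "j = q"
      using q \<open>middle j\<close> \<open>j < n\<close> by (auto simp: middle_def)
    moreover have "mid_row n q = 1"
      using q by (simp add: mid_row_def evec_def half_up_def)
    ultimately show ?thesis using middle_sum by simp
  qed
  moreover have "mid_row n j = 0" if "\<not> middle j"
  proof (cases "j < m")
    case False
    then have "n - 1 - j < m" using that by (simp add: middle_def)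
    then have "mid_row n (n - 1 - j) = 0" by (simp add: mid_row_eq_0 m_def)
    then show ?thesis using mid_row_symmetric[OF \<open>j < n\<close>] by simp
  qed (simp add: mid_row_eq_0 m_def)
  ultimately show ?thesis
    using D_eq[OF \<open>j < n\<close>] by (auto simp: D_def s_def m_def)
qed

lemma Cmat_stochastic:
  assumes "1 \<le> i" and "i \<le> n"
  shows "stochastic k n (Cmat k n i)"
proof -
  have "(\<Sum>j<n. Cmat k n i r j) = (\<Sum>j\<in>{i - 1}. Cmat k n i r j)" for r
    using assms by (intro sum.mono_neutral_right) (auto simp: Cmat_def)
  then show ?thesis
    using assms by (auto simp: stochastic_def is_mat_def Cmat_def)
qed

lemma lincomb_row_sum:
  assumes "\<forall>l<N. F l \<in> Gamma k n" and "r < k"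
  shows "(\<Sum>j<n. lincomb N c F r j) = (\<Sum>l<N. c l)"
proof -
  have "(\<Sum>j<n. lincomb N c F r j) = (\<Sum>l<N. c l * (\<Sum>j<n. F l r j))"
    by (simp add: lincomb_def sum_distrib_left sum.swap[of _ "{..<n}"])
  also have "\<dots> = (\<Sum>l<N. c l)"
    using assms by (intro sum.cong) (auto simp: Gamma_def stochastic_def)
  finally show ?thesis .
qed

lemma lincomb_is_mat: "\<forall>l<N. is_mat k n (F l) \<Longrightarrow> is_mat k n (lincomb N c F)"
  by (simp add: is_mat_def lincomb_def)

text \<open>For large t, P = (Y + t J) / (s + t) is stochastic, J being the uniform stochastic
  matrix, and Y = (s + t) P - t J.\<close>
lemma const_row_sums_in_span:
  assumes "0 < n" and span: "\<forall>A\<in>Gamma k n. \<exists>c. A = lincomb N c F"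
    and Y: "is_mat k n Y" and row_sums: "\<forall>r<k. (\<Sum>j<n. Y r j) = s"
  shows "\<exists>c. Y = lincomb N c F"
proof -
  define T where "T = (\<Sum>r<k. \<Sum>j<n. \<bar>Y r j\<bar>)"
  define t where "t = real n * T + \<bar>s\<bar> + 1"
  have T_bound: "\<bar>Y r j\<bar> \<le> T" if "r < k" "j < n" for r j
  proof -
    have "\<bar>Y r j\<bar> \<le> (\<Sum>j<n. \<bar>Y r j\<bar>)"
      using that by (intro member_le_sum) auto
    also have "\<dots> \<le> T"
      unfolding T_def using that
      by (intro member_le_sum[of r "{..<k}" "\<lambda>r. \<Sum>j<n. \<bar>Y r j\<bar>"]) (auto intro: sum_nonneg)
    finally show ?thesis .
  qed
  have "0 \<le> real n * T" unfolding T_def by (intro mult_nonneg_nonneg sum_nonneg) auto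
  then have t_bound: "real n * T \<le> t" and st: "0 < s + t"
    by (auto simp: t_def)
  define J where "J = (\<lambda>r j. if r < k \<and> j < n then 1 / real n else 0)"
  have J_row_sum: "(\<Sum>j<n. J r j) = 1" if "r < k" for r
    using that \<open>0 < n\<close> by (simp add: J_def)
  define P where "P = (\<lambda>r j. (Y r j + t * J r j) / (s + t))"
  have P_nonneg: "0 \<le> P r j" if "r < k" "j < n" for r j
  proof -
    have "T \<le> t / real n"
      using t_bound \<open>0 < n\<close> by (simp add: field_simps)
    moreover have "t * J r j = t / real n"
      using that by (simp add: J_def)
    ultimately have "0 \<le> Y r j + t * J r j"
      using T_bound[OF that] by linarith
    then show ?thesis using st by (simp add: P_def)
  qed
  have "(\<Sum>j<n. P r j) = 1" if "r < k" for r
    using row_sums that J_row_sum[OF that] st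
    by (simp add: P_def sum_divide_distrib[symmetric] sum.distrib sum_distrib_left[symmetric])
  then have "P \<in> Gamma k n" and "J \<in> Gamma k n"
    using Y P_nonneg J_row_sum by (auto simp: Gamma_def stochastic_def is_mat_def P_def J_def)
  then obtain c1 c2 where P: "P = lincomb N c1 F" and J: "J = lincomb N c2 F"
    using span by meson
  have "Y r j = (s + t) * P r j - t * J r j" for r j
    using st by (simp add: P_def)
  then have "Y = lincomb N (\<lambda>l. (s + t) * c1 l - t * c2 l) F"
    unfolding P J
    by (simp add: fun_eq_iff lincomb_def sum_distrib_left sum_subtractf[symmetric] algebra_simps)
  then show ?thesis by blast
qed

lemma lincomb_new_family:
  fixes m :: nat and c :: "nat \<Rightarrow> real" and B :: "nat \<Rightarrow> rmat"
  assumes N: "N = k * (n - 1) + 1"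
  defines "X \<equiv> \<lambda>r j. lincomb N c B r j + lincomb m (\<lambda>i. c (N + i)) (\<lambda>i. Cmat k n (i + 1)) r j"
  shows "lincomb (N + m) c (new_family k n B) = stack k n X
    (\<lambda>j. (\<Sum>l<N. c l) * mid_row n j + (\<Sum>i<m. c (N + i) * dvec n (i + 1) j)) (flip k n X)"
proof -
  define top where "top l = (if l < N then B l else Cmat k n (l - N + 1))" for l
  define mid where "mid l = (if l < N then mid_row n else dvec n (l - N + 1))" for l
  have "new_family k n B = (\<lambda>l. stack k n (top l) (mid l) (flip k n (top l)))"
    by (simp add: fun_eq_iff new_family_def Btilde_eq_stack Ctilde_def top_def mid_def N)
  moreover have "lincomb (N + m) c top = X"
    by (simp add: fun_eq_iff X_def lincomb_def sum_lessThan_add top_def)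
  moreover have "(\<lambda>j. \<Sum>l<N + m. c l * mid l j)
      = (\<lambda>j. (\<Sum>l<N. c l) * mid_row n j + (\<Sum>i<m. c (N + i) * dvec n (i + 1) j))"
    by (simp add: fun_eq_iff sum_lessThan_add mid_def sum_distrib_right)
  ultimately show ?thesis
    by (simp add: lincomb_stack)
qed

lemma new_family_in_Gamma_pi:
  assumes "0 < n" and B: "\<forall>l<k * (n - 1) + 1. B l \<in> Gamma k n"
    and l: "l < k * (n - 1) + 1 + (half_up n - 1)"
  shows "new_family k n B l \<in> Gamma_pi (2 * k + 1) n"
proof (cases "l < k * (n - 1) + 1")
  case True
  have "stochastic k n (B l)" using B True by (simp add: Gamma_def)
  then show ?thesis
    unfolding new_family_def if_P[OF True] Btilde_eq_stack
    by (rule stack_in_Gamma_pi) (use mid_row_symmetric mid_row_nonneg mid_row_sum[OF \<open>0 < n\<close>] in auto)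
next
  case False
  define i where "i = l - (k * (n - 1) + 1) + 1"
  have "1 \<le> i" and "2 * i \<le> n"
    using False l \<open>0 < n\<close> by (auto simp: i_def half_up_def)
  then have "stochastic k n (Cmat k n i)" by (simp add: Cmat_stochastic)
  then show ?thesis
    unfolding new_family_def if_not_P[OF False] Ctilde_def i_def[symmetric]
    by (rule stack_in_Gamma_pi)
      (use \<open>1 \<le> i\<close> \<open>2 * i \<le> n\<close> dvec_symmetric[of i n] dvec_sum[of i n] dvec_nonneg in auto)
qed

lemma lin_indep_new_family:
  assumes B: "\<forall>l<k * (n - 1) + 1. B l \<in> Gamma k n" and indep: "lin_indep (k * (n - 1) + 1) B"
  shows "lin_indep (k * (n - 1) + 1 + (half_up n - 1)) (new_family k n B)"
proof -
  define N where "N = k * (n - 1) + 1"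
  define m where "m = half_up n - 1"
  have "\<forall>l<N + m. c l = 0" if "lincomb (N + m) c (new_family k n B) = (\<lambda>i j. 0)" for c
  proof -
    note zero = that[unfolded lincomb_new_family[OF N_def]]
    have C_coeffs: "c (N + i) = 0" if "i < m" for i
    proof -
      have "2 * m < n" using that by (simp add: m_def half_up_def)
      then have "i < n" and "\<not> n - 1 - i < m" using that by auto
      then have "(\<Sum>i'<m. c (N + i') * dvec n (i' + 1) i) = c (N + i) / 2"
        using sum_scaled_dvec[of i n] that by (simp add: m_def)
      then show ?thesis
        using stack_eq_0D(2)[OF zero \<open>i < n\<close>] mid_row_eq_0[of i n] that by (simp add: m_def)
    qed
    then have "lincomb m (\<lambda>i. c (N + i)) (\<lambda>i. Cmat k n (i + 1)) = (\<lambda>r j. 0)"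
      by (simp add: fun_eq_iff lincomb_def)
    then have "lincomb N c B r j = 0" if "r < k" "j < n" for r j
      using stack_eq_0D(1)[OF zero that] by simp
    moreover have "is_mat k n (lincomb N c B)"
      using B by (intro lincomb_is_mat) (simp add: N_def Gamma_def stochastic_def)
    ultimately have "lincomb N c B = (\<lambda>i j. 0)"
      unfolding is_mat_def by (metis not_less)
    then have "c l = 0" if "l < N" for l
      using indep that by (simp add: lin_indep_def N_def)
    with C_coeffs show ?thesis
      by (metis add_diff_inverse_nat nat_add_left_cancel_less)
  qed
  then show ?thesis
    by (simp add: lin_indep_def N_def m_def)
qed

lemma stochastic_split_lincomb:
  assumes "0 < k" and "0 < n" and B: "\<forall>l<N. B l \<in> Gamma k n"
    and span: "\<forall>A\<in>Gamma k n. \<exists>c. A = lincomb N c B"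
    and G: "\<forall>i<m. G i \<in> Gamma k n" and X: "stochastic k n X"
  obtains b where "(\<lambda>r j. lincomb N b B r j + lincomb m a G r j) = X"
    and "(\<Sum>l<N. b l) = 1 - (\<Sum>i<m. a i)"
proof -
  define C where "C = lincomb m a G"
  have "is_mat k n (\<lambda>r j. X r j - C r j)"
    using X G lincomb_is_mat[of m k n G a]
    by (simp add: C_def is_mat_def stochastic_def Gamma_def)
  moreover have row_sums: "\<forall>r<k. (\<Sum>j<n. X r j - C r j) = 1 - (\<Sum>i<m. a i)"
    using X lincomb_row_sum[OF G]
    by (simp add: sum_subtractf stochastic_def C_def)
  ultimately have "\<exists>b. (\<lambda>r j. X r j - C r j) = lincomb N b B"
    by (rule const_row_sums_in_span[OF \<open>0 < n\<close> span])
  then obtain b where b: "(\<lambda>r j. X r j - C r j) = lincomb N b B" ..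
  have "(\<Sum>l<N. b l) = (\<Sum>j<n. lincomb N b B 0 j)"
    using lincomb_row_sum[OF B \<open>0 < k\<close>] by simp
  also have "\<dots> = 1 - (\<Sum>i<m. a i)"
    using row_sums \<open>0 < k\<close> by (simp flip: b)
  finally have "(\<Sum>l<N. b l) = 1 - (\<Sum>i<m. a i)" .
  moreover have "(\<lambda>r j. lincomb N b B r j + C r j) = X"
    by (simp flip: b)
  ultimately show ?thesis
    using that unfolding C_def by blast
qed

lemma Gamma_pi_in_span_new_family:
  assumes "0 < k" and "0 < n" and B: "\<forall>l<k * (n - 1) + 1. B l \<in> Gamma k n"
    and span: "\<forall>A\<in>Gamma k n. \<exists>c. A = lincomb (k * (n - 1) + 1) c B"
    and A: "A \<in> Gamma_pi (2 * k + 1) n"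
  shows "\<exists>c. A = lincomb (k * (n - 1) + 1 + (half_up n - 1)) c (new_family k n B)"
proof -
  define N where "N = k * (n - 1) + 1"
  define m where "m = half_up n - 1"
  obtain X v where X: "stochastic k n X" and sym: "\<forall>j<n. v (n - 1 - j) = v j"
    and sum1: "(\<Sum>j<n. v j) = 1" and A_eq: "A = stack k n X v (flip k n X)"
    using A by (rule Gamma_pi_stackE)
  define a where "a i = 2 * v i" for i
  have C: "\<forall>i<m. Cmat k n (i + 1) \<in> Gamma k n"
    using \<open>0 < n\<close> by (auto simp: Gamma_def m_def half_up_def intro: Cmat_stochastic)
  obtain b where top: "(\<lambda>r j. lincomb N b B r j + lincomb m a (\<lambda>i. Cmat k n (i + 1)) r j) = X"
    and b_sum: "(\<Sum>l<N. b l) = 1 - (\<Sum>i<m. a i)"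
    by (rule stochastic_split_lincomb[OF \<open>0 < k\<close> \<open>0 < n\<close> B[folded N_def] span[folded N_def] C X])
  define c where "c l = (if l < N then b l else a (l - N))" for l
  have "lincomb N c B = lincomb N b B" and "(\<lambda>i. c (N + i)) = a"
    and c_sum: "(\<Sum>l<N. c l) = 1 - (\<Sum>i<m. a i)" and c_C: "c (N + i) = a i" for i
    using b_sum by (simp_all add: fun_eq_iff lincomb_def c_def)
  then have "lincomb (N + m) c (new_family k n B)
      = stack k n X (\<lambda>j. (\<Sum>l<N. c l) * mid_row n j + (\<Sum>i<m. c (N + i) * dvec n (i + 1) j)) (flip k n X)"
    unfolding lincomb_new_family[OF N_def] by (simp only: top)
  also have "\<dots> = A"
    unfolding A_eq
  proof (rule stack_cong)
    fix j assume "j < n"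
    show "(\<Sum>l<N. c l) * mid_row n j + (\<Sum>i<m. c (N + i) * dvec n (i + 1) j) = v j"
      using symmetric_row_decomp[OF sym sum1 \<open>j < n\<close>] by (simp add: c_sum c_C a_def m_def)
  qed
  finally show ?thesis
    unfolding N_def m_def by blast
qed

theorem mainTheorem10:
  fixes k n :: nat and B :: "nat \<Rightarrow> rmat"
  assumes "0 < k" and "0 < n"
    and "is_basis (Gamma k n) (k * (n - 1) + 1) B"
  shows "is_basis (Gamma_pi (2 * k + 1) n) (k * (n - 1) + 1 + (half_up n - 1)) (new_family k n B)"
proof -
  have B: "\<forall>l<k * (n - 1) + 1. B l \<in> Gamma k n"
    and indep: "lin_indep (k * (n - 1) + 1) B"
    and span: "\<forall>A\<in>Gamma k n. \<exists>c. A = lincomb (k * (n - 1) + 1) c B"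
    using assms(3) by (simp_all add: is_basis_def)
  show ?thesis
    unfolding is_basis_def
    using new_family_in_Gamma_pi[OF \<open>0 < n\<close> B] lin_indep_new_family[OF B indep]
      Gamma_pi_in_span_new_family[OF \<open>0 < k\<close> \<open>0 < n\<close> B span]
    by blast
qed

end
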